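(* Let $X$ be a $T_1$ space and $T\subset X$ such that (a) for every $x\in X-T$ there is a clopen subset $W$ of $X$ with $x\in W$ and $W\cap T=\emptyset$, and (b) $X-T$ is totally disconnected. Let $\mathcal{C}\subset\mathcal{K}(X)$ be connected. Then for all $Y_1,Y_2\in\mathcal{C}$, $Y_1-T=Y_2-T$.
   Context: $\mathcal{K}(X)$ is the set of nonempty compact subsets of $X$ with the Vietoris topology (generated by $U^+=\{A: A\subset U\}$ and $U^-=\{A: A\cap U\neq\emptyset\}$ for $U$ open in $X$). A space is totally disconnected if any two distinct points can be separated by a clopen set containing one but not the other. *)

theory Defs
  imports "HOL-Analysis.Analysis"
begin

definition compact_sets :: "'a topology \<Rightarrow> 'a set set" where
  "compact_sets X = {K. K \<subseteq> topspace X \<and> compactin X K \<and> K \<noteq> {}}"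

definition vietoris :: "'a topology \<Rightarrow> 'a set topology" where
  "vietoris X = topology_generated_by
     ({{A \<in> compact_sets X. A \<subseteq> U} | U. openin X U} \<union>
      {{A \<in> compact_sets X. A \<inter> U \<noteq> {}} | U. openin X U})"

definition totally_disconnected_space :: "'a topology \<Rightarrow> bool" where
  "totally_disconnected_space X \<longleftrightarrow>
     (\<forall>x\<in>topspace X. \<forall>y\<in>topspace X. x \<noteq> y \<longrightarrow>
        (\<exists>C. openin X C \<and> closedin X C \<and> x \<in> C \<and> y \<notin> C))"

end

theory Submission
  imports Defs
begin

text \<open>
  Under (a) and (b) every point \<open>x \<notin> T\<close> is its own quasi-component, so it is separated by a
  clopen set \<open>W\<close> from every compact set avoiding it. For clopen \<open>W\<close> the compacta meeting \<open>W\<close>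
  form a clopen subset of \<open>\<K>(X)\<close>, hence a connected family meets \<open>W\<close> in all its members or in
  none. So if \<open>x \<in> Y\<^sub>1 - T\<close> then \<open>x \<in> Y\<^sub>2\<close>.
\<close>

lemma totally_disconnected_space_iff_quasi_component_of:
  "totally_disconnected_space X \<longleftrightarrow> (\<forall>x y. quasi_component_of X x y \<longrightarrow> x = y)"
  unfolding totally_disconnected_space_def quasi_component_of by blast

lemma quasi_component_of_clopen_subtopology:
  assumes "closedin X W" "openin X W" "x \<in> W" "y \<in> W" "quasi_component_of X x y"
  shows "quasi_component_of (subtopology X W) x y"
  using assms unfolding quasi_component_of
  by (metis closedin_trans_full openin_trans_full openin_subset topspace_subtopology_subset)

lemma quasi_component_of_set_eq_singleton:
  assumes "closedin X W" "openin X W" "x \<in> W" "W \<inter> T = {}"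
    and "totally_disconnected_space (subtopology X (topspace X - T))"
  shows "quasi_component_of_set X x = {x}"
proof -
  have "y = x" if "quasi_component_of X x y" for y
  proof -
    have "y \<in> W"
      using that assms(1-3) unfolding quasi_component_of by blast
    then have "quasi_component_of (subtopology X W) x y"
      using assms(1-3) that by (intro quasi_component_of_clopen_subtopology)
    moreover have "W \<subseteq> topspace X - T"
      using assms(2,4) openin_subset by blast
    ultimately have "quasi_component_of (subtopology X (topspace X - T)) x y"
      by (metis quasi_component_of_mono)
    with assms(5) show "y = x"
      unfolding totally_disconnected_space_iff_quasi_component_of by metis
  qed
  moreover have "x \<in> topspace X"
    using assms(2,3) openin_subset by blast
  ultimately show ?thesis
    by auto
qed

lemma topspace_vietoris [simp]: "topspace (vietoris X) = compact_sets X"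
  unfolding vietoris_def by (auto simp: compact_sets_def)

lemma openin_vietoris_subset:
  "openin X U \<Longrightarrow> openin (vietoris X) {A \<in> compact_sets X. A \<subseteq> U}"
  unfolding vietoris_def by (rule topology_generated_by_Basis) blast

lemma openin_vietoris_hitting:
  "openin X U \<Longrightarrow> openin (vietoris X) {A \<in> compact_sets X. A \<inter> U \<noteq> {}}"
  unfolding vietoris_def by (rule topology_generated_by_Basis) blast

lemma closedin_vietoris_hitting:
  assumes "closedin X U"
  shows "closedin (vietoris X) {A \<in> compact_sets X. A \<inter> U \<noteq> {}}"
proof -
  have "compact_sets X - {A \<in> compact_sets X. A \<inter> U \<noteq> {}} =
        {A \<in> compact_sets X. A \<subseteq> topspace X - U}"
    unfolding compact_sets_def by blast
  moreover have "openin (vietoris X) {A \<in> compact_sets X. A \<subseteq> topspace X - U}"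
    using assms by (simp add: openin_vietoris_subset openin_diff)
  ultimately show ?thesis
    unfolding closedin_def by auto
qed

lemma connectedin_vietoris_clopen_cases:
  assumes "connectedin (vietoris X) \<C>" "closedin X W" "openin X W"
  shows "(\<forall>A\<in>\<C>. A \<inter> W \<noteq> {}) \<or> (\<forall>A\<in>\<C>. A \<inter> W = {})"
proof -
  let ?H = "{A \<in> compact_sets X. A \<inter> W \<noteq> {}}"
  have "\<C> \<subseteq> compact_sets X"
    using connectedin_subset_topspace[OF assms(1)] by simp
  moreover have "\<C> \<subseteq> ?H \<or> disjnt \<C> ?H"
    using assms(2,3)
    by (intro connectedin_clopen_cases[OF assms(1)] closedin_vietoris_hitting openin_vietoris_hitting)
  ultimately show ?thesis
    by (auto simp: disjnt_iff)
qed

lemma connectedin_vietoris_mem_singleton_quasi_component: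
  assumes "connectedin (vietoris X) \<C>" "Y1 \<in> \<C>" "Y2 \<in> \<C>"
    and "x \<in> Y1" "quasi_component_of_set X x = {x}"
  shows "x \<in> Y2"
proof (rule ccontr)
  assume "x \<notin> Y2"
  have "x \<in> topspace X"
    using assms(5) quasi_component_of_eq_empty[of X x] by auto
  then have "{x} \<in> quasi_components_of X"
    unfolding quasi_components_of_def by (rule rev_image_eqI) (simp add: assms(5))
  moreover have "compactin X Y2"
    using connectedin_subset_topspace[OF assms(1)] assms(3) by (auto simp: compact_sets_def)
  ultimately have "separated_between X {x} Y2"
    using \<open>x \<notin> Y2\<close> by (simp add: separated_between_quasi_component_compact)
  then obtain W where W: "closedin X W" "openin X W" "x \<in> W" "Y2 \<inter> W = {}"
    unfolding separated_between by blast
  have "Y1 \<inter> W \<noteq> {}"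
    using assms(4) W(3) by blast
  then show False
    using connectedin_vietoris_clopen_cases[OF assms(1) W(1,2)] assms(2,3) W(4) by blast
qed

theorem lemma5p3:
  fixes X :: "'a topology" and T :: "'a set" and \<C> :: "'a set set"
  assumes "t1_space X"
    and "T \<subseteq> topspace X"
    and "\<forall>x \<in> topspace X - T. \<exists>W. openin X W \<and> closedin X W \<and> x \<in> W \<and> W \<inter> T = {}"
    and "totally_disconnected_space (subtopology X (topspace X - T))"
    and "\<C> \<subseteq> compact_sets X"
    and "connectedin (vietoris X) \<C>"
  shows "\<forall>Y1\<in>\<C>. \<forall>Y2\<in>\<C>. Y1 - T = Y2 - T"
proof (intro ballI)
  have sub: "Y - T \<subseteq> Y'" if Y: "Y \<in> \<C>" "Y' \<in> \<C>" for Y Y'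
  proof
    fix x assume x: "x \<in> Y - T"
    then have "x \<in> topspace X - T"
      using assms(5) Y(1) unfolding compact_sets_def by blast
    then obtain W where W: "openin X W" "closedin X W" "x \<in> W" "W \<inter> T = {}"
      using assms(3) by blast
    have "quasi_component_of_set X x = {x}"
      using quasi_component_of_set_eq_singleton[OF W(2,1,3,4) assms(4)] .
    then show "x \<in> Y'"
      using connectedin_vietoris_mem_singleton_quasi_component[OF assms(6) Y] x by blast
  qed
  fix Y1 Y2 assume "Y1 \<in> \<C>" "Y2 \<in> \<C>"
  then show "Y1 - T = Y2 - T"
    using sub[of Y1 Y2] sub[of Y2 Y1] by blast
qed

end
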